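(* Let $X$ be a compact topological space, let $D\subseteq X$, let $\overline{D}$ be the closure of $D$ in $X$, and put $\partial D:=\overline{D}\setminus D$. Let $\overline{\mathbb{C}}=\mathbb{C}\cup\{\infty\}$ be the Riemann sphere and let $f\colon\overline{D}\to\overline{\mathbb{C}}$ be a continuous map such that $f(D)$ is open in $\overline{\mathbb{C}}$. Suppose that $f(\overline{D})\subseteq\mathbb{C}$ and that $f(\partial D)=J$, where $J\subseteq\mathbb{C}$ is the image of a Jordan curve (a simple closed curve). Then $f(D)=\mathcal{I}(J)$, where $\mathcal{I}(J)$ is the bounded connected component of $\mathbb{C}\setminus J$.
   Context: Note that $\partial D$ is defined as $\overline{D}\setminus D$. *)

theory Defs
  imports "HOL-Analysis.Analysis"
begin

end

theory Submission
  imports Defs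
begin

text \<open>The image \<open>U = f ` D\<close> is a nonempty bounded open set whose frontier lies in \<open>J\<close>,
  because \<open>f ` closure D = U \<union> J\<close> is compact. Such a set cannot meet the connected unbounded
  outside of \<open>J\<close>, nor \<open>J\<close> itself, which lies in the closure of the outside; so \<open>U\<close> is a nonempty
  open subset of the connected inside of \<open>J\<close> with no frontier points there, hence all of it.\<close>

lemma connected_subset_of_frontier_disjoint:
  assumes "connected S" "S \<inter> U \<noteq> {}" "S \<inter> frontier U = {}"
  shows "S \<subseteq> U"
  using connected_Int_frontier[OF assms(1,2)] assms(3) by blast

lemma frontier_image_subset_image_closure_diff:
  fixes f :: "'a::topological_space \<Rightarrow> 'b::t2_space"
  assumes "compact (f ` closure D)" and "open (f ` D)"
  shows "frontier (f ` D) \<subseteq> f ` (closure D - D)"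
proof -
  have "closure (f ` D) \<subseteq> f ` closure D"
    using assms(1) closure_subset[of D]
    by (intro closure_minimal) (auto simp: compact_imp_closed)
  then show ?thesis
    using assms(2) by (auto simp: frontier_def interior_open)
qed

lemma bounded_open_eq_inside_of_frontier_subset:
  fixes g :: "real \<Rightarrow> complex"
  assumes "simple_path g" "pathfinish g = pathstart g"
    and "open U" "bounded U" "U \<noteq> {}"
    and frontier_U: "frontier U \<subseteq> path_image g"
  shows "U = inside (path_image g)"
proof -
  let ?J = "path_image g" and ?I = "inside (path_image g)" and ?O = "outside (path_image g)"
  have jordan: "connected ?I" "connected ?O" "\<not> bounded ?O" "?I \<union> ?O = - ?J" "frontier ?O = ?J"
    using Jordan_inside_outside[OF assms(1,2)] by auto
  have "U \<inter> ?O = {}"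
  proof (rule ccontr)
    assume "U \<inter> ?O \<noteq> {}"
    then have "?O \<subseteq> U"
      using frontier_U outside_no_overlap[of ?J]
      by (intro connected_subset_of_frontier_disjoint[OF jordan(2)]) blast+
    then show False
      using \<open>bounded U\<close> jordan(3) bounded_subset by blast
  qed
  moreover have "U \<inter> ?J = {}"
  proof -
    have "U \<inter> closure ?O = {}"
      using open_Int_closure_eq_empty[OF \<open>open U\<close>] \<open>U \<inter> ?O = {}\<close> by blast
    then show ?thesis
      using jordan(5) by (auto simp: frontier_def)
  qed
  ultimately have "U \<subseteq> ?I"
    using jordan(4) by blast
  moreover have "?I \<subseteq> U"
    using \<open>U \<subseteq> ?I\<close> \<open>U \<noteq> {}\<close> frontier_U inside_no_overlap[of ?J]
    by (intro connected_subset_of_frontier_disjoint[OF jordan(1)]) blast+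
  ultimately show ?thesis
    by blast
qed

theorem mainTheorem5:
  fixes D :: "'a::topological_space set"
    and f :: "'a \<Rightarrow> complex"
    and g :: "real \<Rightarrow> complex"
  assumes X_compact: "compact (UNIV :: 'a set)"
    and f_cont: "continuous_on (closure D) f"
    and f_open: "open (f ` D)"
    and jordan: "simple_path g" "pathfinish g = pathstart g"
    and boundary: "f ` (closure D - D) = path_image g"
  shows "f ` D = inside (path_image g)"
proof (rule bounded_open_eq_inside_of_frontier_subset[OF jordan f_open])
  have "compact (f ` closure D)"
    using compact_continuous_image[OF f_cont] X_compact
    by (simp add: closed_Int_compact[of _ UNIV, simplified])
  then show "bounded (f ` D)"
    using closure_subset[of D] by (meson compact_imp_bounded bounded_subset image_mono)
  show "frontier (f ` D) \<subseteq> path_image g"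
    using frontier_image_subset_image_closure_diff[OF \<open>compact (f ` closure D)\<close> f_open] boundary
    by simp
  show "f ` D \<noteq> {}"
    using boundary path_image_nonempty[of g] by auto
qed

end
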